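(* Let $a,b,c\in\mathbb{R}$ with $c\neq 0$, and let $c_{1,2}=-\frac{2}{27}a^3+\frac13 ab\pm\frac{2}{27}\sqrt{(a^2-3b)^3}$ (defined when $b\le a^2/3$; upper sign for $c_1$). The cubic $x^3+ax^2+bx+c$ has three positive real roots (counted with multiplicity) if and only if $a<0$ and either (i) $0<b\le a^2/4$ and $c_2\le c<0$, or (ii) $a^2/4<b\le a^2/3$ and $c_2\le c\le c_1<0$. *)

theory Defs
  imports Complex_Main "HOL-Computational_Algebra.Polynomial"
begin

definition cubic_c1 :: "real \<Rightarrow> real \<Rightarrow> real" where
  "cubic_c1 a b = -(2/27) * a^3 + (1/3) * a * b + (2/27) * sqrt ((a^2 - 3*b)^3)"

definition cubic_c2 :: "real \<Rightarrow> real \<Rightarrow> real" where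
  "cubic_c2 a b = -(2/27) * a^3 + (1/3) * a * b - (2/27) * sqrt ((a^2 - 3*b)^3)"

definition three_pos_roots :: "real \<Rightarrow> real \<Rightarrow> real \<Rightarrow> bool" where
  "three_pos_roots a b c \<longleftrightarrow>
     (\<exists>r1 r2 r3. r1 > 0 \<and> r2 > 0 \<and> r3 > 0 \<and>
        [:c, b, a, 1:] = [:-r1, 1:] * [:-r2, 1:] * [:-r3, 1:])"

end

(* A real monic cubic splits over the reals iff its discriminant is nonnegative: split off a
   real root r (intermediate value theorem); the discriminant of the cubic is that of the
   quadratic cofactor times the square of the cofactor's value at r. For a split cubic, Vieta's
   formulas and Descartes' rule of signs show that all roots are positive iff a < 0 < b and
   c < 0. When 3b <= a^2, the discriminant equals -27 (c - c1)(c - c2), where c1 and c2 are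
   the values of -(x^3 + a x^2 + b x) at the two critical points, so it is nonnegative iff
   c2 <= c <= c1. Finally, with s = sqrt(a^2 - 3b), c1 = (s - a)^2 (a + 2s) / 27; for a < 0
   this is negative exactly when b > a^2/4, which separates the cases (i) and (ii). *)
theory Submission
  imports Defs "HOL-Library.Quadratic_Discriminant"
begin

definition cubic_discr :: "real \<Rightarrow> real \<Rightarrow> real \<Rightarrow> real" where
  "cubic_discr a b c = 18*a*b*c - 4*a^3*c + a^2*b^2 - 4*b^3 - 27*c^2"

lemma monic_cubic_eq_linear_factors_iff:
  fixes a b c r1 r2 r3 :: real
  shows "[:c, b, a, 1:] = [:-r1, 1:] * [:-r2, 1:] * [:-r3, 1:] \<longleftrightarrow>
    a = -(r1 + r2 + r3) \<and> b = r1*r2 + r1*r3 + r2*r3 \<and> c = -(r1*r2*r3)"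
  by (auto simp: algebra_simps)

lemma cubic_discr_linear_factors:
  "cubic_discr (-(r1 + r2 + r3)) (r1*r2 + r1*r3 + r2*r3) (-(r1*r2*r3))
     = ((r1 - r2) * (r1 - r3) * (r2 - r3))^2"
  unfolding cubic_discr_def by algebra

lemma cubic_discr_linear_times_quadratic:
  "cubic_discr (p - r) (q - r*p) (-(r*q)) = discrim 1 p q * (r^2 + p*r + q)^2"
  unfolding cubic_discr_def discrim_def by algebra

lemma monic_cubic_has_real_root:
  fixes a b c :: real
  shows "\<exists>x. poly [:c, b, a, 1:] x = 0"
proof -
  define K where "K = \<bar>a\<bar> + \<bar>b\<bar> + \<bar>c\<bar>"
  define f where "f x = x^3 + a*x^2 + b*x + c" for x
  have lower_order: "\<bar>a*x^2 + b*x + c\<bar> \<le> K * x^2" if "1 \<le> \<bar>x\<bar>" for x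
  proof -
    have "\<bar>x\<bar> * 1 \<le> \<bar>x\<bar> * \<bar>x\<bar>"
      using that by (intro mult_left_mono) auto
    then have "\<bar>x\<bar> \<le> x^2" "1 \<le> x^2"
      using that by (simp_all add: power2_eq_square)
    then have "\<bar>b*x\<bar> \<le> \<bar>b\<bar> * x^2" "\<bar>c\<bar> \<le> \<bar>c\<bar> * x^2"
      using mult_left_mono[of "\<bar>x\<bar>" "x^2" "\<bar>b\<bar>"] mult_left_mono[of 1 "x^2" "\<bar>c\<bar>"]
      by (simp_all add: abs_mult)
    moreover have "\<bar>a*x^2 + b*x + c\<bar> \<le> \<bar>a\<bar> * x^2 + \<bar>b*x\<bar> + \<bar>c\<bar>"
      using abs_triangle_ineq[of "a*x^2" "b*x"] abs_triangle_ineq[of "a*x^2 + b*x" c]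
      by (simp add: abs_mult)
    ultimately show ?thesis
      unfolding K_def by (simp add: distrib_right)
  qed
  define M where "M = K + 1"
  have "1 \<le> M" unfolding M_def K_def by simp
  have "K * M^2 < M * M^2"
    using \<open>1 \<le> M\<close> by (simp add: M_def)
  then have "K * M^2 < M^3"
    by (simp add: power3_eq_cube power2_eq_square mult.assoc)
  then have "\<bar>a*M^2 + b*M + c\<bar> < M^3" "\<bar>a*(-M)^2 + b*(-M) + c\<bar> < M^3"
    using lower_order[of M] lower_order[of "-M"] \<open>1 \<le> M\<close> by auto
  then have "f (-M) < 0" "0 < f M"
    unfolding f_def by (simp_all add: abs_less_iff)
  then have "\<exists>x\<ge>-M. x \<le> M \<and> f x = 0"
    using \<open>1 \<le> M\<close> by (intro IVT) (auto simp: f_def intro!: continuous_intros)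
  then show ?thesis
    unfolding f_def by (auto simp: algebra_simps power2_eq_square power3_eq_cube)
qed

lemma monic_cubic_splits_if_discr_nonneg:
  fixes a b c :: real
  assumes "0 \<le> cubic_discr a b c"
  shows "\<exists>r1 r2 r3. [:c, b, a, 1:] = [:-r1, 1:] * [:-r2, 1:] * [:-r3, 1:]"
proof -
  obtain r1 where "poly [:c, b, a, 1:] r1 = 0"
    using monic_cubic_has_real_root by blast
  \<comment> \<open>x^2 + p x + q is the quotient of the cubic by x - r1.\<close>
  define p where "p = a + r1"
  define q where "q = b + r1*p"
  have abc: "a = p - r1" "b = q - r1*p" "c = -(r1*q)"
    using \<open>poly [:c, b, a, 1:] r1 = 0\<close> unfolding p_def q_def by (auto simp: algebra_simps)
  have "0 \<le> discrim 1 p q"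
  proof (cases "r1^2 + p*r1 + q = 0")
    case True
    then have "discrim 1 p q = (2*r1 + p)^2"
      unfolding discrim_def by algebra
    then show ?thesis by simp
  next
    case False
    then show ?thesis
      using assms cubic_discr_linear_times_quadratic[of p r1 q]
      by (simp add: abc zero_le_mult_iff)
  qed
  then obtain r2 where r2: "r2^2 + p*r2 + q = 0"
    using discriminant_nonneg_ex[of 1 p q] by auto
  have q_eq: "q = r2 * (-p - r2)"
    using r2 by (simp add: algebra_simps power2_eq_square)
  have "a = -(r1 + r2 + (-p - r2))" "b = r1*r2 + r1*(-p - r2) + r2*(-p - r2)"
    "c = -(r1*r2*(-p - r2))"
    unfolding abc q_eq by (simp_all add: algebra_simps)
  then show ?thesis
    unfolding monic_cubic_eq_linear_factors_iff by blast
qed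

lemma cubic_discr_nonneg_iff_splits:
  fixes a b c :: real
  shows "0 \<le> cubic_discr a b c \<longleftrightarrow>
    (\<exists>r1 r2 r3. [:c, b, a, 1:] = [:-r1, 1:] * [:-r2, 1:] * [:-r3, 1:])"
proof
  assume "\<exists>r1 r2 r3. [:c, b, a, 1:] = [:-r1, 1:] * [:-r2, 1:] * [:-r3, 1:]"
  then obtain r1 r2 r3 where "a = -(r1 + r2 + r3)" "b = r1*r2 + r1*r3 + r2*r3" "c = -(r1*r2*r3)"
    unfolding monic_cubic_eq_linear_factors_iff by blast
  then show "0 \<le> cubic_discr a b c"
    by (simp only: cubic_discr_linear_factors zero_le_power2)
qed (rule monic_cubic_splits_if_discr_nonneg)

lemma cubic_discr_nonneg_imp_3b_le_a2:
  fixes a b c :: real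
  assumes "0 \<le> cubic_discr a b c"
  shows "3*b \<le> a^2"
proof -
  obtain r1 r2 r3 where vieta: "a = -(r1 + r2 + r3)" "b = r1*r2 + r1*r3 + r2*r3"
    using assms unfolding cubic_discr_nonneg_iff_splits monic_cubic_eq_linear_factors_iff by blast
  have "a^2 - 3*b = ((r1 - r2)^2 + (r1 - r3)^2 + (r2 - r3)^2) / 2"
    unfolding vieta by (simp add: field_simps power2_eq_square)
  also have "\<dots> \<ge> 0" by simp
  finally show ?thesis by simp
qed

lemma monic_cubic_root_pos:
  fixes a b c x :: real
  assumes "a < 0" "0 < b" "c < 0" "poly [:c, b, a, 1:] x = 0"
  shows "0 < x"
proof (rule ccontr)
  assume "\<not> 0 < x"
  then have "0 \<le> x * (a + x)" "x * (b + x * (a + x)) \<le> 0"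
    using assms(1,2) by (simp_all add: mult_nonpos_nonpos mult_nonpos_nonneg)
  then show False
    using assms(3,4) by simp
qed

lemma three_pos_roots_iff_discr:
  "three_pos_roots a b c \<longleftrightarrow> a < 0 \<and> 0 < b \<and> c < 0 \<and> 0 \<le> cubic_discr a b c"
proof
  assume "three_pos_roots a b c"
  then obtain r1 r2 r3 :: real where "r1 > 0" "r2 > 0" "r3 > 0"
    and vieta: "a = -(r1 + r2 + r3)" "b = r1*r2 + r1*r3 + r2*r3" "c = -(r1*r2*r3)"
    unfolding three_pos_roots_def monic_cubic_eq_linear_factors_iff by blast
  moreover have "0 \<le> cubic_discr a b c"
    unfolding vieta by (simp only: cubic_discr_linear_factors zero_le_power2)
  ultimately show "a < 0 \<and> 0 < b \<and> c < 0 \<and> 0 \<le> cubic_discr a b c"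
    by (simp add: add_pos_pos)
next
  assume signs: "a < 0 \<and> 0 < b \<and> c < 0 \<and> 0 \<le> cubic_discr a b c"
  then obtain r1 r2 r3 where split: "[:c, b, a, 1:] = [:-r1, 1:] * [:-r2, 1:] * [:-r3, 1:]"
    using cubic_discr_nonneg_iff_splits by blast
  have "poly [:c, b, a, 1:] r = 0" if "r \<in> {r1, r2, r3}" for r
    using that unfolding split poly_mult by auto
  then have "0 < r1" "0 < r2" "0 < r3"
    using monic_cubic_root_pos signs by blast+
  with split show "three_pos_roots a b c"
    unfolding three_pos_roots_def by blast
qed

lemma cubic_discr_eq_c1_c2:
  fixes a b c :: real
  assumes "3*b \<le> a^2"
  shows "cubic_discr a b c = -27 * ((c - cubic_c1 a b) * (c - cubic_c2 a b))"
proof -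
  have "(sqrt ((a^2 - 3*b)^3))^2 = (a^2 - 3*b)^3"
    using assms by simp
  then show ?thesis
    unfolding cubic_discr_def cubic_c1_def cubic_c2_def by algebra
qed

lemma cubic_c2_le_c1: "3*b \<le> a^2 \<Longrightarrow> cubic_c2 a b \<le> cubic_c1 a b"
  unfolding cubic_c1_def cubic_c2_def by simp

lemma cubic_discr_nonneg_iff_between:
  fixes a b c :: real
  assumes "3*b \<le> a^2"
  shows "0 \<le> cubic_discr a b c \<longleftrightarrow> cubic_c2 a b \<le> c \<and> c \<le> cubic_c1 a b"
  using cubic_c2_le_c1[OF assms]
  by (auto simp: cubic_discr_eq_c1_c2[OF assms] mult_le_0_iff)

lemma cubic_c1_eq:
  fixes a b :: real
  assumes "3*b \<le> a^2"
  shows "cubic_c1 a b = (sqrt (a^2 - 3*b) - a)^2 * (a + 2 * sqrt (a^2 - 3*b)) / 27"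
proof -
  define s where "s = sqrt (a^2 - 3*b)"
  have b: "b = (a^2 - s^2) / 3"
    using assms by (simp add: s_def)
  have "sqrt ((a^2 - 3*b)^3) = s^3"
    by (simp add: s_def real_sqrt_power)
  then have "cubic_c1 a b = -(2/27) * a^3 + (1/3) * a * b + (2/27) * s^3"
    unfolding cubic_c1_def by simp
  also have "\<dots> = (s - a)^2 * (a + 2*s) / 27"
    unfolding b by (simp add: field_simps power2_eq_square power3_eq_cube)
  finally show ?thesis
    unfolding s_def .
qed

lemma cubic_c1_neg_iff:
  fixes a b :: real
  assumes "a < 0" "3*b \<le> a^2"
  shows "cubic_c1 a b < 0 \<longleftrightarrow> a^2 < 4*b"
proof -
  define s where "s = sqrt (a^2 - 3*b)"
  have "0 \<le> s" "s^2 = a^2 - 3*b"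
    using assms(2) by (simp_all add: s_def)
  have "cubic_c1 a b < 0 \<longleftrightarrow> a + 2*s < 0"
    using assms \<open>0 \<le> s\<close> by (simp add: cubic_c1_eq s_def[symmetric] mult_less_0_iff)
  also have "\<dots> \<longleftrightarrow> \<not> (-a)^2 \<le> (2*s)^2"
    using assms(1) \<open>0 \<le> s\<close> by (subst power_mono_iff) auto
  also have "\<dots> \<longleftrightarrow> a^2 < 4*b"
    using \<open>s^2 = a^2 - 3*b\<close> by (auto simp: power_mult_distrib)
  finally show ?thesis .
qed

theorem mainTheorem5:
  fixes a b c :: real
  assumes "c \<noteq> 0"
  shows "three_pos_roots a b c \<longleftrightarrow>
    a < 0 \<and>
    ((0 < b \<and> b \<le> a^2/4 \<and> cubic_c2 a b \<le> c \<and> c < 0) \<or>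
     (a^2/4 < b \<and> b \<le> a^2/3 \<and> cubic_c2 a b \<le> c \<and> c \<le> cubic_c1 a b \<and> cubic_c1 a b < 0))"
proof -
  have "three_pos_roots a b c \<longleftrightarrow>
      a < 0 \<and> 0 < b \<and> c < 0 \<and> 3*b \<le> a^2 \<and> cubic_c2 a b \<le> c \<and> c \<le> cubic_c1 a b"
    using three_pos_roots_iff_discr cubic_discr_nonneg_imp_3b_le_a2 cubic_discr_nonneg_iff_between
    by blast
  then show ?thesis
    using cubic_c1_neg_iff[of a b] by auto
qed

end
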